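(* Let a group $G$ act uniformly equicontinuously on a cofinite graph $\Gamma$, let $\{R\mid R\in I\}$ be a fundamental system of $G$-invariant compatible cofinite entourages of $\Gamma$, and give $G$ the uniformity having $\{N_R\mid R\in I\}$ as a fundamental system of cofinite congruences. Then this uniformity on $G$ is Hausdorff if and only if $G$ acts faithfully on $\Gamma$.
   Context: A graph $\Gamma$ is a set $\Gamma=V(\Gamma)\sqcup E(\Gamma)$ with maps $s,t\colon E\to V$ and a fixed-point-free involution $e\mapsto\overline e$ with $s(\overline e)=t(e)$, $t(\overline e)=s(e)$. An equivalence relation $R$ on $\Gamma$ is compatible if $R\subseteq (V\times V)\cup(E\times E)$, $(e,e')\in R$ implies $(s(e),s(e')),(t(e),t(e')),(\overline e,\overline{e'})\in R$, and $(e,\overline e)\notin R$. A cofinite entourage is an entourage that is an equivalence relation with finitely many classes. A cofinite graph is a graph with a Hausdorff uniformity in which compatible cofinite entourages form a fundamental system. A group $G$ acts on $\Gamma$ if it acts on the set $\Gamma$ preserving vertices and edges, commuting with $s,t,\overline{\phantom e}$, and there is a $G$-invariant orientation. The action is uniformly equicontinuous if for each entourage $W$ there is an entourage $V$ with $(g\times g)[V]\subseteq W$ for all $g\in G$; such fundamental systems $\{R\}$ of $G$-invariant ($ (g\times g)[R]\subseteq R$ for all $g$) compatible cofinite entourages exist. $N_R=\{(g,h)\in G\times G:(g\cdot x,h\cdot x)\in R\ \forall x\in\Gamma\}$; these are cofinite congruences on $G$. The action is faithful if for every $g\neq 1$ there is $x\in\Gamma$ with $g\cdot x\ne x$. *)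

theory Defs
  imports Main "HOL-Algebra.Group_Action"
begin

text \<open>A graph: carrier X (the set Gamma), vertex set V, edges X - V,
  source s, target t, fixed-point-free involution bar on edges.\<close>
definition is_graph :: "'a set \<Rightarrow> 'a set \<Rightarrow> ('a \<Rightarrow> 'a) \<Rightarrow> ('a \<Rightarrow> 'a) \<Rightarrow> ('a \<Rightarrow> 'a) \<Rightarrow> bool" where
  "is_graph X V s t bar \<longleftrightarrow> V \<subseteq> X \<and>
     (\<forall>e \<in> X - V. s e \<in> V \<and> t e \<in> V \<and> bar e \<in> X - V \<and> bar e \<noteq> e \<and>
        bar (bar e) = e \<and> s (bar e) = t e \<and> t (bar e) = s e)"

definition uniformity_on :: "'a set \<Rightarrow> ('a \<times> 'a) set set \<Rightarrow> bool" where
  "uniformity_on X U \<longleftrightarrow> U \<noteq> {} \<and>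
     (\<forall>W \<in> U. Id_on X \<subseteq> W \<and> W \<subseteq> X \<times> X) \<and>
     (\<forall>W \<in> U. \<forall>W'. W \<subseteq> W' \<and> W' \<subseteq> X \<times> X \<longrightarrow> W' \<in> U) \<and>
     (\<forall>W \<in> U. \<forall>W' \<in> U. W \<inter> W' \<in> U) \<and>
     (\<forall>W \<in> U. W\<inverse> \<in> U) \<and>
     (\<forall>W \<in> U. \<exists>W' \<in> U. W' O W' \<subseteq> W)"

definition hausdorff_uniformity :: "'a set \<Rightarrow> ('a \<times> 'a) set set \<Rightarrow> bool" where
  "hausdorff_uniformity X U \<longleftrightarrow> \<Inter> U = Id_on X"

definition uniformity_generated :: "'a set \<Rightarrow> ('a \<times> 'a) set set \<Rightarrow> ('a \<times> 'a) set set" where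
  "uniformity_generated X B = {W. W \<subseteq> X \<times> X \<and> (\<exists>R \<in> B. R \<subseteq> W)}"

definition cofinite_entourage :: "'a set \<Rightarrow> ('a \<times> 'a) set set \<Rightarrow> ('a \<times> 'a) set \<Rightarrow> bool" where
  "cofinite_entourage X U R \<longleftrightarrow> R \<in> U \<and> equiv X R \<and> finite (X // R)"

definition compatible_rel :: "'a set \<Rightarrow> 'a set \<Rightarrow> ('a \<Rightarrow> 'a) \<Rightarrow> ('a \<Rightarrow> 'a) \<Rightarrow> ('a \<Rightarrow> 'a)
    \<Rightarrow> ('a \<times> 'a) set \<Rightarrow> bool" where
  "compatible_rel X V s t bar R \<longleftrightarrow> equiv X R \<and>
     R \<subseteq> (V \<times> V) \<union> ((X - V) \<times> (X - V)) \<and>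
     (\<forall>(e, e') \<in> R \<inter> ((X - V) \<times> (X - V)).
        (s e, s e') \<in> R \<and> (t e, t e') \<in> R \<and> (bar e, bar e') \<in> R) \<and>
     (\<forall>e \<in> X - V. (e, bar e) \<notin> R)"

definition cofinite_graph :: "'a set \<Rightarrow> 'a set \<Rightarrow> ('a \<Rightarrow> 'a) \<Rightarrow> ('a \<Rightarrow> 'a) \<Rightarrow> ('a \<Rightarrow> 'a)
    \<Rightarrow> ('a \<times> 'a) set set \<Rightarrow> bool" where
  "cofinite_graph X V s t bar U \<longleftrightarrow> is_graph X V s t bar \<and> uniformity_on X U \<and>
     hausdorff_uniformity X U \<and>
     (\<forall>W \<in> U. \<exists>R. cofinite_entourage X U R \<and> compatible_rel X V s t bar R \<and> R \<subseteq> W)"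

definition graph_action :: "('g, 'b) monoid_scheme \<Rightarrow> 'a set \<Rightarrow> 'a set \<Rightarrow> ('a \<Rightarrow> 'a) \<Rightarrow> ('a \<Rightarrow> 'a)
    \<Rightarrow> ('a \<Rightarrow> 'a) \<Rightarrow> ('g \<Rightarrow> 'a \<Rightarrow> 'a) \<Rightarrow> bool" where
  "graph_action G X V s t bar \<phi> \<longleftrightarrow> group_action G X \<phi> \<and>
     (\<forall>g \<in> carrier G. \<forall>x \<in> V. \<phi> g x \<in> V) \<and>
     (\<forall>g \<in> carrier G. \<forall>e \<in> X - V. \<phi> g e \<in> X - V \<and>
        s (\<phi> g e) = \<phi> g (s e) \<and> t (\<phi> g e) = \<phi> g (t e) \<and> bar (\<phi> g e) = \<phi> g (bar e)) \<and>
     (\<exists>Or \<subseteq> X - V. (\<forall>e \<in> X - V. e \<in> Or \<longleftrightarrow> bar e \<notin> Or) \<and>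
        (\<forall>g \<in> carrier G. \<forall>e \<in> Or. \<phi> g e \<in> Or))"

definition unif_equicontinuous :: "('g, 'b) monoid_scheme \<Rightarrow> ('a \<times> 'a) set set \<Rightarrow> ('g \<Rightarrow> 'a \<Rightarrow> 'a) \<Rightarrow> bool" where
  "unif_equicontinuous G U \<phi> \<longleftrightarrow>
     (\<forall>W \<in> U. \<exists>W' \<in> U. \<forall>g \<in> carrier G. (\<lambda>(x, y). (\<phi> g x, \<phi> g y)) ` W' \<subseteq> W)"

definition G_invariant :: "('g, 'b) monoid_scheme \<Rightarrow> ('g \<Rightarrow> 'a \<Rightarrow> 'a) \<Rightarrow> ('a \<times> 'a) set \<Rightarrow> bool" where
  "G_invariant G \<phi> R \<longleftrightarrow> (\<forall>g \<in> carrier G. (\<lambda>(x, y). (\<phi> g x, \<phi> g y)) ` R \<subseteq> R)"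

definition N_rel :: "('g, 'b) monoid_scheme \<Rightarrow> 'a set \<Rightarrow> ('g \<Rightarrow> 'a \<Rightarrow> 'a) \<Rightarrow> ('a \<times> 'a) set \<Rightarrow> ('g \<times> 'g) set" where
  "N_rel G X \<phi> R = {(g, h). g \<in> carrier G \<and> h \<in> carrier G \<and> (\<forall>x \<in> X. (\<phi> g x, \<phi> h x) \<in> R)}"

definition faithful_action :: "('g, 'b) monoid_scheme \<Rightarrow> 'a set \<Rightarrow> ('g \<Rightarrow> 'a \<Rightarrow> 'a) \<Rightarrow> bool" where
  "faithful_action G X \<phi> \<longleftrightarrow> (\<forall>g \<in> carrier G. g \<noteq> \<one>\<^bsub>G\<^esub> \<longrightarrow> (\<exists>x \<in> X. \<phi> g x \<noteq> x))"

end

theory Submission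
  imports Defs
begin

text \<open>The intersection of a uniformity with fundamental system \<open>{N\<^sub>R}\<close> is the intersection of the
  \<open>N\<^sub>R\<close>; since \<open>{R}\<close> is a fundamental system of a Hausdorff uniformity, \<open>\<Inter>R\<close> is the diagonal, so
  \<open>\<Inter>N\<^sub>R\<close> relates exactly the elements acting identically on \<open>\<Gamma>\<close>. Hence \<open>G\<close> is Hausdorff iff the
  action map \<open>G \<rightarrow> Bij \<Gamma>\<close> is injective, i.e. iff its kernel is trivial, which is faithfulness.\<close>

lemma Inter_fundamental_system:
  assumes "B \<subseteq> U" and "\<forall>W \<in> U. \<exists>R \<in> B. R \<subseteq> W"
  shows "\<Inter> B = \<Inter> U"
  using assms by blast

lemma Inter_uniformity_generated:
  assumes "\<forall>R \<in> B. R \<subseteq> X \<times> X"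
  shows "\<Inter> (uniformity_generated X B) = \<Inter> B"
  using assms unfolding uniformity_generated_def by blast

lemma (in group_action) action_eq_iff:
  assumes "g \<in> carrier G" and "h \<in> carrier G"
  shows "\<phi> g = \<phi> h \<longleftrightarrow> (\<forall>x \<in> E. \<phi> g x = \<phi> h x)"
proof -
  have "\<phi> g \<in> extensional E" "\<phi> h \<in> extensional E"
    using bij_prop0 assms by (simp_all add: Bij_def)
  then show ?thesis by (auto intro: extensionalityI)
qed

lemma (in group_action) Inter_N_rel:
  assumes "I \<noteq> {}" and "\<Inter> I = Id_on E"
  shows "\<Inter> (N_rel G E \<phi> ` I) = {(g, h) \<in> carrier G \<times> carrier G. \<phi> g = \<phi> h}"
proof -
  have pointwise: "(\<forall>R \<in> I. (\<phi> g x, \<phi> h x) \<in> R) \<longleftrightarrow> \<phi> g x = \<phi> h x"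
    if "g \<in> carrier G" "x \<in> E" for g h x
  proof -
    have "\<phi> g x \<in> E"
      using element_image that by blast
    then have "(\<phi> g x, \<phi> h x) \<in> \<Inter> I \<longleftrightarrow> \<phi> g x = \<phi> h x"
      unfolding assms(2) Id_on_iff by blast
    then show ?thesis
      by blast
  qed
  have "(g, h) \<in> \<Inter> (N_rel G E \<phi> ` I) \<longleftrightarrow>
      (g, h) \<in> {(g, h) \<in> carrier G \<times> carrier G. \<phi> g = \<phi> h}" for g h
  proof -
    have "(g, h) \<in> \<Inter> (N_rel G E \<phi> ` I) \<longleftrightarrow>
        g \<in> carrier G \<and> h \<in> carrier G \<and> (\<forall>x \<in> E. \<forall>R \<in> I. (\<phi> g x, \<phi> h x) \<in> R)"
      using assms(1) unfolding N_rel_def by blast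
    also have "\<dots> \<longleftrightarrow> g \<in> carrier G \<and> h \<in> carrier G \<and> (\<forall>x \<in> E. \<phi> g x = \<phi> h x)"
      using pointwise by blast
    also have "\<dots> \<longleftrightarrow> g \<in> carrier G \<and> h \<in> carrier G \<and> \<phi> g = \<phi> h"
      using action_eq_iff by metis
    finally show ?thesis
      by simp
  qed
  then show ?thesis
    by (intro equalityI subrelI) blast+
qed

lemma (in group_action) faithful_action_iff_inj_on:
  "faithful_action G E \<phi> \<longleftrightarrow> inj_on \<phi> (carrier G)"
proof -
  interpret G: group G
    using group_hom by (simp add: group_hom_def)
  have fixes_all_iff: "(\<forall>x \<in> E. \<phi> g x = x) \<longleftrightarrow> \<phi> g = \<phi> \<one>" if "g \<in> carrier G" for g
  proof -
    have "\<forall>x \<in> E. \<phi> \<one> x = x"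
      by (simp flip: id_eq_one)
    then show ?thesis
      by (simp add: action_eq_iff[OF that G.one_closed])
  qed
  have "kernel G (BijGroup E) \<phi> = {g \<in> carrier G. \<phi> g = \<phi> \<one>}"
    unfolding kernel_def by (simp add: BijGroup_def id_eq_one)
  also have "\<dots> = {g \<in> carrier G. \<forall>x \<in> E. \<phi> g x = x}"
    using fixes_all_iff by blast
  finally have "kernel G (BijGroup E) \<phi> = {g \<in> carrier G. \<forall>x \<in> E. \<phi> g x = x}" .
  moreover have "\<one> \<in> {g \<in> carrier G. \<forall>x \<in> E. \<phi> g x = x}"
    using fixes_all_iff by simp
  ultimately show ?thesis
    unfolding group_hom.inj_iff_trivial_ker[OF group_hom] faithful_action_def
    by auto
qed

lemma (in group_action) hausdorff_N_rel_iff_faithful: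
  assumes "I \<noteq> {}" and "\<Inter> I = Id_on E"
  shows "hausdorff_uniformity (carrier G) (uniformity_generated (carrier G) (N_rel G E \<phi> ` I))
     \<longleftrightarrow> faithful_action G E \<phi>"
proof -
  have N_rel_subset: "\<forall>N \<in> N_rel G E \<phi> ` I. N \<subseteq> carrier G \<times> carrier G"
    by (auto simp: N_rel_def)
  have "hausdorff_uniformity (carrier G) (uniformity_generated (carrier G) (N_rel G E \<phi> ` I))
      \<longleftrightarrow> {(g, h) \<in> carrier G \<times> carrier G. \<phi> g = \<phi> h} = Id_on (carrier G)"
    unfolding hausdorff_uniformity_def Inter_uniformity_generated[OF N_rel_subset] Inter_N_rel[OF assms] ..
  also have "\<dots> \<longleftrightarrow> inj_on \<phi> (carrier G)"
    by (auto simp: inj_on_def set_eq_iff Id_on_iff)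
  also have "\<dots> \<longleftrightarrow> faithful_action G E \<phi>"
    by (rule faithful_action_iff_inj_on[symmetric])
  finally show ?thesis .
qed

text \<open>Equicontinuity, \<open>G\<close>-invariance and compatibility of the \<open>R\<close> only make the \<open>N\<^sub>R\<close> cofinite
  congruences; the Hausdorff criterion itself does not use them.\<close>

theorem mainTheorem6:
  fixes G :: "('g, 'b) monoid_scheme"
    and X V :: "'a set" and s t bar :: "'a \<Rightarrow> 'a"
    and U :: "('a \<times> 'a) set set" and \<phi> :: "'g \<Rightarrow> 'a \<Rightarrow> 'a"
    and I :: "('a \<times> 'a) set set"
  assumes "group G"
    and "cofinite_graph X V s t bar U"
    and "graph_action G X V s t bar \<phi>"
    and "unif_equicontinuous G U \<phi>"
    and "I \<subseteq> U"
    and "\<forall>R \<in> I. G_invariant G \<phi> R \<and> compatible_rel X V s t bar R \<and> cofinite_entourage X U R"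
    and "\<forall>W \<in> U. \<exists>R \<in> I. R \<subseteq> W"
  shows "hausdorff_uniformity (carrier G)
           (uniformity_generated (carrier G) ((\<lambda>R. N_rel G X \<phi> R) ` I))
         \<longleftrightarrow> faithful_action G X \<phi>"
proof -
  interpret group_action G X \<phi>
    using assms(3) by (simp add: graph_action_def)
  have "U \<noteq> {}" and "\<Inter> U = Id_on X"
    using assms(2) by (simp_all add: cofinite_graph_def uniformity_on_def hausdorff_uniformity_def)
  then have "I \<noteq> {}" and "\<Inter> I = Id_on X"
    using assms(7) Inter_fundamental_system[OF assms(5,7)] by auto
  then show ?thesis
    by (rule hausdorff_N_rel_iff_faithful)
qed

end
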